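(* Let $\mathcal X$ be a set of $n\ge3$ items and let $\mathcal C$ be the collection of all subsets of $\mathcal X$ of even size at least 2, so that $d=\sum_{C\in\mathcal C}|C|=n2^{n-2}$. Then the comparison incidence graph $G_{\mathcal C}$ has a cycle decomposition $\sigma$ with $\mu(\sigma)\le5\log_2(n)$ and $\alpha(\sigma)\le5\log_2(n)$.
   Context: $G_{\mathcal C}$ is the bipartite graph with one node per item of $\mathcal X$ and one node per set $C\in\mathcal C$, with an edge between $x$ and $C$ iff $x\in C$. A cycle decomposition $\sigma$ is a partition of the edge set of $G_{\mathcal C}$ into edge-disjoint simple cycles $\sigma_1,\dots,\sigma_{|\sigma|}$; with $|\sigma_i|$ the number of edges of $\sigma_i$, $\mu(\sigma)=d/|\sigma|$ and $\alpha(\sigma)=\frac1d\sum_i|\sigma_i|^2$. *)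

theory Defs
  imports Complex_Main
begin

text \<open>Comparison incidence graph: vertices are items (Inl x) and sets (Inr C);
undirected edges are two-element vertex sets {Inl x, Inr C} with x in C.\<close>
definition comp_graph_edges :: "'a set set \<Rightarrow> ('a + 'a set) set set" where
  "comp_graph_edges \<C> = {{Inl x, Inr C} | x C. C \<in> \<C> \<and> x \<in> C}"

definition cycle_edges :: "'v list \<Rightarrow> 'v set set" where
  "cycle_edges vs = {{vs ! i, vs ! (Suc i mod length vs)} | i. i < length vs}"

definition simple_cycle :: "'v set set \<Rightarrow> 'v list \<Rightarrow> bool" where
  "simple_cycle E vs \<longleftrightarrow> length vs \<ge> 3 \<and> distinct vs \<and> cycle_edges vs \<subseteq> E"

definition cycle_decomposition :: "'v set set \<Rightarrow> 'v list list \<Rightarrow> bool" where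
  "cycle_decomposition E \<sigma> \<longleftrightarrow>
     (\<forall>c\<in>set \<sigma>. simple_cycle E c) \<and>
     (\<Union>c\<in>set \<sigma>. cycle_edges c) = E \<and>
     (\<forall>i<length \<sigma>. \<forall>j<length \<sigma>. i \<noteq> j \<longrightarrow> cycle_edges (\<sigma> ! i) \<inter> cycle_edges (\<sigma> ! j) = {})"

definition total_size :: "'a set set \<Rightarrow> nat" where
  "total_size \<C> = (\<Sum>C\<in>\<C>. card C)"

definition mu_dec :: "nat \<Rightarrow> 'v list list \<Rightarrow> real" where
  "mu_dec d \<sigma> = real d / real (length \<sigma>)"

definition alpha_dec :: "nat \<Rightarrow> 'v list list \<Rightarrow> real" where
  "alpha_dec d \<sigma> = (1 / real d) * (\<Sum>i<length \<sigma>. real (card (cycle_edges (\<sigma> ! i))) ^ 2)"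

end

theory Submission
  imports Defs
begin

(* We decompose the graph into cycles of length 4 and 6; then \<mu> and \<alpha> are at most
   6 \<le> 5 log2 3 \<le> 5 log2 n.
   The empty set has no incident edges, so we may work with all even subsets E(X) of X; let
   F(X, z) be those containing z. Then E(X) = E(X - {z}) \<union> F(X, z) and, for w \<noteq> z,
   F(X, z) = F(X - {w}, z) \<union> {T \<union> {w, z} | T \<in> E(Z)} with Z = X - {w, z}, both unions disjoint.
   In the graph of the last family, the edges at items of T form a copy of the graph of E(Z), and
   the edges at w and z split into the 4-cycles w, T \<union> {w, z}, z, T' \<union> {w, z}, where
   T' = T \<triangle> {a, b} for fixed distinct a, b \<in> Z. Strong induction on |X| then decomposes both
   graphs, starting from a 6-cycle for E(X) with |X| = 3 and a 6- and a 4-cycle for F(X, z)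
   with |X| = 4. *)

lemma cycle_edges_conv_image:
  "cycle_edges vs = (\<lambda>i. {vs ! i, vs ! (Suc i mod length vs)}) ` {..<length vs}"
  unfolding cycle_edges_def by auto

lemma finite_cycle_edges [simp]: "finite (cycle_edges vs)"
  unfolding cycle_edges_conv_image by simp

lemma card_cycle_edges_le: "card (cycle_edges vs) \<le> length vs"
  unfolding cycle_edges_conv_image by (metis card_image_le card_lessThan finite_lessThan)

lemma set_subset_Union_cycle_edges: "set vs \<subseteq> \<Union>(cycle_edges vs)"
proof
  fix v assume "v \<in> set vs"
  then obtain i where "i < length vs" "vs ! i = v" by (auto simp: in_set_conv_nth)
  then show "v \<in> \<Union>(cycle_edges vs)" unfolding cycle_edges_def by blast
qed

lemma cycle_edges_map: "cycle_edges (map f vs) = (`) f ` cycle_edges vs"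
proof (cases "vs = []")
  case False
  then have "\<And>i. Suc i mod length vs < length vs" by simp
  then show ?thesis unfolding cycle_edges_conv_image by (auto simp: image_image)
qed (simp add: cycle_edges_def)

lemma cycle_edges_4: "cycle_edges [p, q, r, s] = {{p, q}, {q, r}, {r, s}, {s, p}}"
proof -
  have "{..<length [p, q, r, s]} = {0, 1, 2, 3}" by auto
  then show ?thesis unfolding cycle_edges_conv_image by simp
qed

lemma cycle_edges_6:
  "cycle_edges [p, q, r, s, t, u] = {{p, q}, {q, r}, {r, s}, {s, t}, {t, u}, {u, p}}"
proof -
  have "{..<length [p, q, r, s, t, u]} = {0, 1, 2, 3, 4, 5}" by auto
  then show ?thesis unfolding cycle_edges_conv_image by simp
qed

definition cycle_partition :: "nat \<Rightarrow> 'v set set \<Rightarrow> 'v list set \<Rightarrow> bool" where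
  "cycle_partition k E S \<longleftrightarrow> finite S \<and>
     (\<forall>c\<in>S. 3 \<le> length c \<and> length c \<le> k \<and> distinct c) \<and>
     pairwise (\<lambda>c c'. disjnt (cycle_edges c) (cycle_edges c')) S \<and>
     (\<Union>c\<in>S. cycle_edges c) = E"

lemma cycle_partition_mono: "cycle_partition k E S \<Longrightarrow> k \<le> l \<Longrightarrow> cycle_partition l E S"
  unfolding cycle_partition_def by auto

lemma cycle_partition_Un:
  assumes "cycle_partition k E S" "cycle_partition k E' S'" "disjnt E E'"
  shows "cycle_partition k (E \<union> E') (S \<union> S')"
proof -
  have "cycle_edges c \<subseteq> E" if "c \<in> S" for c
    using assms(1) that unfolding cycle_partition_def by blast
  moreover have "cycle_edges c \<subseteq> E'" if "c \<in> S'" for c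
    using assms(2) that unfolding cycle_partition_def by blast
  ultimately have "disjnt (cycle_edges c) (cycle_edges c')" if "c \<in> S" "c' \<in> S'" for c c'
    using assms(3) that by (meson disjnt_subset1 disjnt_subset2)
  then have "pairwise (\<lambda>c c'. disjnt (cycle_edges c) (cycle_edges c')) (S \<union> S')"
    using assms(1,2) unfolding cycle_partition_def pairwise_def by (metis Un_iff disjnt_sym)
  with assms(1,2) show ?thesis unfolding cycle_partition_def by auto
qed

lemma inj_on_image_of_inj_on_Union:
  "inj_on f (\<Union>E) \<Longrightarrow> inj_on ((`) f) E"
  by (rule inj_onI) (meson Union_upper inj_on_image_eq_iff)

lemma cycle_partition_image:
  assumes S: "cycle_partition k E S" and inj: "inj_on f (\<Union>E)"
  shows "cycle_partition k ((`) f ` E) (map f ` S)"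
proof -
  have edges: "cycle_edges c \<subseteq> E" if "c \<in> S" for c
    using S that unfolding cycle_partition_def by blast
  have "inj_on f (set c)" if "c \<in> S" for c
    using set_subset_Union_cycle_edges[of c] edges[OF that] inj
    by (meson Union_mono inj_on_subset order_trans)
  then have "\<forall>c\<in>map f ` S. 3 \<le> length c \<and> length c \<le> k \<and> distinct c"
    using S unfolding cycle_partition_def by (auto simp: distinct_map)
  moreover have "disjnt (cycle_edges (map f c)) (cycle_edges (map f c'))"
    if "c \<in> S" "c' \<in> S" "map f c \<noteq> map f c'" for c c'
  proof -
    have "disjnt (cycle_edges c) (cycle_edges c')"
      using S that unfolding cycle_partition_def pairwise_def by auto
    then show ?thesis
      using inj_on_image_of_inj_on_Union[OF inj] edges[OF that(1)] edges[OF that(2)]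
      unfolding cycle_edges_map by (simp add: disjnt_def inj_on_image_Int[symmetric])
  qed
  then have "pairwise (\<lambda>c c'. disjnt (cycle_edges c) (cycle_edges c')) (map f ` S)"
    by (auto intro: pairwise_imageI)
  moreover have "(\<Union>c\<in>map f ` S. cycle_edges c) = (`) f ` E"
  proof -
    have "E = (\<Union>c\<in>S. cycle_edges c)" using S unfolding cycle_partition_def by blast
    then show ?thesis by (simp add: cycle_edges_map image_UN)
  qed
  moreover have "finite (map f ` S)"
    using S unfolding cycle_partition_def by simp
  ultimately show ?thesis
    unfolding cycle_partition_def by blast
qed

lemma cycle_partition_two_hubs:
  fixes g h :: "'i \<Rightarrow> 'v"
  assumes "finite I" "w \<noteq> z" "inj_on g I" "inj_on h I" "disjnt (g ` I) (h ` I)"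
    and hubs: "w \<notin> g ` I \<union> h ` I" "z \<notin> g ` I \<union> h ` I"
  shows "cycle_partition 4 {{u, v} | u v. u \<in> {w, z} \<and> v \<in> g ` I \<union> h ` I}
           ((\<lambda>i. [w, g i, z, h i]) ` I)"
proof -
  have edges:
    "cycle_edges [w, g i, z, h i] = {{u, v} | u v. u \<in> {w, z} \<and> v \<in> {g i, h i}}" for i
    unfolding cycle_edges_4 by (auto simp: insert_commute)
  have rims: "disjnt {g i, h i} {g j, h j}" if "i \<in> I" "j \<in> I" "i \<noteq> j" for i j
    using assms(3-5) that by (auto simp: disjnt_def inj_on_eq_iff)
  have "disjnt (cycle_edges [w, g i, z, h i]) (cycle_edges [w, g j, z, h j])"
    if "i \<in> I" "j \<in> I" "i \<noteq> j" for i j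
  proof -
    have "{u, v} \<noteq> {u', v'}"
      if "u \<in> {w, z}" "u' \<in> {w, z}" "v \<in> {g i, h i}" "v' \<in> {g j, h j}" for u u' v v'
      using that rims[OF \<open>i \<in> I\<close> \<open>j \<in> I\<close> \<open>i \<noteq> j\<close>] hubs \<open>i \<in> I\<close> \<open>j \<in> I\<close>
      by (auto simp: doubleton_eq_iff disjnt_def)
    then show ?thesis unfolding edges disjnt_def by blast
  qed
  then have "pairwise (\<lambda>c c'. disjnt (cycle_edges c) (cycle_edges c'))
      ((\<lambda>i. [w, g i, z, h i]) ` I)"
    by (intro pairwise_imageI) blast
  moreover have "distinct [w, g i, z, h i]" if "i \<in> I" for i
    using assms(2,5) hubs that by (auto simp: disjnt_def)
  moreover have "(\<Union>i\<in>I. cycle_edges [w, g i, z, h i])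
      = {{u, v} | u v. u \<in> {w, z} \<and> v \<in> g ` I \<union> h ` I}"
    unfolding edges by blast
  ultimately show ?thesis
    using assms(1) unfolding cycle_partition_def by auto
qed

lemma cycle_decomposition_of_cycle_partition:
  assumes "cycle_partition k E S"
  obtains \<sigma> where "cycle_decomposition E \<sigma>" "\<forall>c\<in>set \<sigma>. card (cycle_edges c) \<le> k"
proof -
  have cyc: "\<forall>c\<in>S. 3 \<le> length c \<and> length c \<le> k \<and> distinct c"
    and dis: "pairwise (\<lambda>c c'. disjnt (cycle_edges c) (cycle_edges c')) S"
    and cov: "(\<Union>c\<in>S. cycle_edges c) = E"
    using assms unfolding cycle_partition_def by blast+
  obtain \<sigma> where \<sigma>: "set \<sigma> = S" "distinct \<sigma>"
    using assms finite_distinct_list unfolding cycle_partition_def by blast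
  have "simple_cycle E c" if "c \<in> set \<sigma>" for c
    using cyc cov \<sigma>(1) that unfolding simple_cycle_def by auto
  moreover have "cycle_edges (\<sigma> ! i) \<inter> cycle_edges (\<sigma> ! j) = {}"
    if "i < length \<sigma>" "j < length \<sigma>" "i \<noteq> j" for i j
  proof -
    have "\<sigma> ! i \<noteq> \<sigma> ! j" using \<sigma>(2) that by (simp add: nth_eq_iff_index_eq)
    then show ?thesis
      using dis \<sigma>(1) that nth_mem unfolding pairwise_def disjnt_def by metis
  qed
  ultimately have "cycle_decomposition E \<sigma>"
    using cov \<sigma>(1) unfolding cycle_decomposition_def by blast
  moreover have "card (cycle_edges c) \<le> k" if "c \<in> set \<sigma>" for c
    using card_cycle_edges_le[of c] cyc \<sigma>(1) that by fastforce
  ultimately show ?thesis using that by blast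
qed

lemma card_eq_sum_cycle_edges:
  assumes "cycle_decomposition E \<sigma>"
  shows "card E = (\<Sum>i<length \<sigma>. card (cycle_edges (\<sigma> ! i)))"
proof -
  have "set \<sigma> = (!) \<sigma> ` {..<length \<sigma>}" by (auto simp: in_set_conv_nth)
  then have "E = (\<Union>i<length \<sigma>. cycle_edges (\<sigma> ! i))"
    using assms unfolding cycle_decomposition_def by simp
  then show ?thesis
    using assms unfolding cycle_decomposition_def by (simp add: card_UN_disjoint)
qed

lemma mu_dec_le:
  assumes "cycle_decomposition E \<sigma>" "\<forall>c\<in>set \<sigma>. card (cycle_edges c) \<le> k"
  shows "mu_dec (card E) \<sigma> \<le> k"
proof (cases "\<sigma> = []")
  case False
  have "(\<Sum>i<length \<sigma>. card (cycle_edges (\<sigma> ! i)))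
      \<le> of_nat (card {..<length \<sigma>}) * k"
    by (rule sum_bounded_above) (use assms(2) in simp)
  then have "card E \<le> k * length \<sigma>"
    unfolding card_eq_sum_cycle_edges[OF assms(1)] by (simp add: mult.commute)
  then have "real (card E) \<le> k * real (length \<sigma>)"
    using of_nat_mono by fastforce
  then show ?thesis using False by (simp add: mu_dec_def pos_divide_le_eq)
qed (simp add: mu_dec_def)

lemma alpha_dec_le:
  assumes "cycle_decomposition E \<sigma>" "\<forall>c\<in>set \<sigma>. card (cycle_edges c) \<le> k"
  shows "alpha_dec (card E) \<sigma> \<le> k"
proof (cases "card E = 0")
  case False
  let ?c = "\<lambda>i. real (card (cycle_edges (\<sigma> ! i)))"
  have "?c i ^ 2 \<le> k * ?c i" if "i < length \<sigma>" for i
    using assms(2) nth_mem[OF that] by (simp add: power2_eq_square mult_right_mono)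
  then have "(\<Sum>i<length \<sigma>. ?c i ^ 2) \<le> (\<Sum>i<length \<sigma>. k * ?c i)"
    by (intro sum_mono) simp
  also have "\<dots> = k * real (card E)"
    by (simp add: card_eq_sum_cycle_edges[OF assms(1)] sum_distrib_left)
  finally show ?thesis using False by (simp add: alpha_dec_def field_simps)
qed (simp add: alpha_dec_def)

lemma comp_graph_edges_empty [simp]: "comp_graph_edges {} = {}"
  unfolding comp_graph_edges_def by blast

lemma comp_graph_edges_insert:
  "comp_graph_edges (insert C \<C>) = (\<lambda>x. {Inl x, Inr C}) ` C \<union> comp_graph_edges \<C>"
  unfolding comp_graph_edges_def by blast

lemma comp_graph_edges_Un:
  "comp_graph_edges (A \<union> B) = comp_graph_edges A \<union> comp_graph_edges B"
  unfolding comp_graph_edges_def by blast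

lemma comp_graph_edges_Diff_empty: "comp_graph_edges (\<C> - {{}}) = comp_graph_edges \<C>"
  unfolding comp_graph_edges_def by blast

lemma incidence_edge_eq_iff:
  "({Inl x, Inr C} :: ('a + 'b) set) = {Inl y, Inr D} \<longleftrightarrow> x = y \<and> C = D"
  by (auto simp: doubleton_eq_iff)

lemma disjnt_comp_graph_edges:
  "disjnt A B \<Longrightarrow> disjnt (comp_graph_edges A) (comp_graph_edges B)"
  unfolding comp_graph_edges_def disjnt_def by (auto simp: incidence_edge_eq_iff)

lemma card_comp_graph_edges:
  assumes "finite \<C>" "\<forall>C\<in>\<C>. finite C"
  shows "card (comp_graph_edges \<C>) = total_size \<C>"
proof -
  let ?edge = "\<lambda>(C, x). {Inl x, Inr C} :: ('a + 'a set) set"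
  have "comp_graph_edges \<C> = ?edge ` (SIGMA C:\<C>. C)"
    unfolding comp_graph_edges_def by auto
  moreover have "inj_on ?edge (SIGMA C:\<C>. C)"
    by (rule inj_onI) (auto simp: incidence_edge_eq_iff)
  ultimately have "card (comp_graph_edges \<C>) = card (SIGMA C:\<C>. C)"
    by (simp add: card_image)
  also have "\<dots> = total_size \<C>"
    using assms unfolding total_size_def by simp
  finally show ?thesis .
qed

lemma image_map_sum_comp_graph_edges:
  "(`) (map_sum id f) ` comp_graph_edges \<T> =
     {{Inl x, Inr (f T)} | x T. T \<in> \<T> \<and> x \<in> T}"
proof (intro equalityI subsetI)
  fix e assume "e \<in> (`) (map_sum id f) ` comp_graph_edges \<T>"
  then obtain x T where "T \<in> \<T>" "x \<in> T" "e = map_sum id f ` {Inl x, Inr T}"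
    unfolding comp_graph_edges_def by blast
  then show "e \<in> {{Inl x, Inr (f T)} | x T. T \<in> \<T> \<and> x \<in> T}"
    by auto
next
  fix e assume "e \<in> {{Inl x, Inr (f T)} | x T. T \<in> \<T> \<and> x \<in> T}"
  then obtain x T where "T \<in> \<T>" "x \<in> T" "e = map_sum id f ` {Inl x, Inr T}"
    by auto
  then show "e \<in> (`) (map_sum id f) ` comp_graph_edges \<T>"
    unfolding comp_graph_edges_def by blast
qed

lemma comp_graph_edges_image_Un:
  "comp_graph_edges ((\<lambda>T. T \<union> D) ` \<T>) =
     (`) (map_sum id (\<lambda>T. T \<union> D)) ` comp_graph_edges \<T> \<union>
     {{Inl x, Inr (T \<union> D)} | x T. T \<in> \<T> \<and> x \<in> D}"
  (is "?lhs = ?moved \<union> ?hub")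
proof (intro equalityI subsetI)
  fix e assume "e \<in> ?lhs"
  then obtain x T where "T \<in> \<T>" "x \<in> T \<union> D" "e = {Inl x, Inr (T \<union> D)}"
    unfolding comp_graph_edges_def by blast
  then show "e \<in> ?moved \<union> ?hub"
    unfolding image_map_sum_comp_graph_edges by blast
next
  fix e assume "e \<in> ?moved \<union> ?hub"
  then obtain x T where "T \<in> \<T>" "x \<in> T \<union> D" "e = {Inl x, Inr (T \<union> D)}"
    unfolding image_map_sum_comp_graph_edges by blast
  then show "e \<in> ?lhs"
    unfolding comp_graph_edges_def by blast
qed

lemma disjnt_comp_graph_edges_image_Un:
  assumes "\<forall>T\<in>\<T>. disjnt T D"
  shows "disjnt ((`) (map_sum id (\<lambda>T. T \<union> D)) ` comp_graph_edges \<T>)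
           {{Inl x, Inr (T \<union> D)} | x T. T \<in> \<T> \<and> x \<in> D}"
proof -
  have "x \<notin> D" if "T \<in> \<T>" "x \<in> T" for x T
    using assms that unfolding disjnt_def by blast
  then show ?thesis
    unfolding image_map_sum_comp_graph_edges disjnt_def by (auto simp: incidence_edge_eq_iff)
qed

lemma inj_on_map_sum_Un:
  assumes "\<forall>T\<in>\<T>. disjnt T D"
  shows "inj_on (map_sum id (\<lambda>T. T \<union> D)) (\<Union>(comp_graph_edges \<T>))"
proof (rule inj_onI)
  have inj: "inj_on (\<lambda>T. T \<union> D) \<T>"
    using assms unfolding inj_on_def disjnt_def by blast
  fix u v assume "u \<in> \<Union>(comp_graph_edges \<T>)" "v \<in> \<Union>(comp_graph_edges \<T>)"
    and eq: "map_sum id (\<lambda>T. T \<union> D) u = map_sum id (\<lambda>T. T \<union> D) v"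
  then have "u \<in> range Inl \<union> Inr ` \<T>" "v \<in> range Inl \<union> Inr ` \<T>"
    unfolding comp_graph_edges_def by auto
  then show "u = v" using eq by (auto simp: inj_on_eq_iff[OF inj])
qed

lemma even_card_sym_diff:
  assumes "finite A" "finite B" "even (card A)" "even (card B)"
  shows "even (card (sym_diff A B))"
proof -
  have "card (sym_diff A B) = card (A - B) + card (B - A)"
    using assms(1,2) by (intro card_Un_disjoint) auto
  moreover have "card A = card (A \<inter> B) + card (A - B)"
    and "card B = card (A \<inter> B) + card (B - A)"
    using assms(1,2) card_Int_Diff by (metis inf_commute)+
  ultimately show ?thesis using assms(3,4) by presburger
qed

lemma obtain_two_distinct_elements:
  assumes "2 \<le> card A"
  obtains a b where "a \<in> A" "b \<in> A" "a \<noteq> b"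
proof -
  obtain B where "B \<subseteq> A" "card B = 2"
    using assms obtain_subset_with_card_n by metis
  then show ?thesis using that card_2_iff by (metis insert_subset)
qed

definition even_subsets :: "'a set \<Rightarrow> 'a set set" where
  "even_subsets X = {C. C \<subseteq> X \<and> even (card C)}"

definition even_subsets_containing :: "'a set \<Rightarrow> 'a \<Rightarrow> 'a set set" where
  "even_subsets_containing X z = {C \<in> even_subsets X. z \<in> C}"

lemma even_subsets_eq_filter_Pow:
  "even_subsets X = Set.filter (\<lambda>C. even (card C)) (Pow X)"
  unfolding even_subsets_def by auto

lemma even_subsets_Diff_empty:
  assumes "finite X"
  shows "even_subsets X - {{}} = {C. C \<subseteq> X \<and> even (card C) \<and> 2 \<le> card C}"
proof -
  have "2 \<le> card C \<longleftrightarrow> C \<noteq> {}" if "C \<subseteq> X" "even (card C)" for C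
  proof -
    have "2 \<le> card C \<longleftrightarrow> card C \<noteq> 0" using that(2) by presburger
    then show ?thesis using finite_subset[OF that(1) assms] by simp
  qed
  then show ?thesis
    unfolding even_subsets_def by blast
qed

lemma even_subsets_split:
  "even_subsets X = even_subsets (X - {z}) \<union> even_subsets_containing X z"
  "disjnt (even_subsets (X - {z})) (even_subsets_containing X z)"
  unfolding even_subsets_containing_def even_subsets_def disjnt_def by auto

lemma image_Un_pair_even_subsets:
  assumes "finite X" "w \<in> X" "z \<in> X" "w \<noteq> z"
  shows "(\<lambda>T. T \<union> {w, z}) ` even_subsets (X - {w, z}) =
           {C \<in> even_subsets X. w \<in> C \<and> z \<in> C}"
proof -
  have card: "card (T \<union> {w, z}) = card T + 2" if "T \<subseteq> X - {w, z}" for T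
  proof -
    have "finite T" "w \<notin> T" "z \<notin> T"
      using that assms(1) finite_subset by auto
    then show ?thesis using assms(4) by simp
  qed
  show ?thesis
  proof (intro equalityI subsetI)
    fix C assume "C \<in> (\<lambda>T. T \<union> {w, z}) ` even_subsets (X - {w, z})"
    then obtain T where "T \<subseteq> X - {w, z}" "even (card T)" "C = T \<union> {w, z}"
      unfolding even_subsets_def by blast
    then show "C \<in> {C \<in> even_subsets X. w \<in> C \<and> z \<in> C}"
      using card assms(2,3) unfolding even_subsets_def by auto
  next
    fix C assume C: "C \<in> {C \<in> even_subsets X. w \<in> C \<and> z \<in> C}"
    define T where "T = C - {w, z}"
    have T: "T \<subseteq> X - {w, z}" "C = T \<union> {w, z}"
      using C unfolding T_def even_subsets_def by auto
    then have "card C = card T + 2" using card by simp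
    then have "T \<in> even_subsets (X - {w, z})"
      using C T(1) unfolding even_subsets_def by simp
    then show "C \<in> (\<lambda>T. T \<union> {w, z}) ` even_subsets (X - {w, z})"
      using T(2) by blast
  qed
qed

lemma even_subsets_containing_split:
  assumes "finite X" "w \<in> X" "z \<in> X" "w \<noteq> z"
  shows "even_subsets_containing X z =
           even_subsets_containing (X - {w}) z \<union> (\<lambda>T. T \<union> {w, z}) ` even_subsets (X - {w, z})"
    and "disjnt (even_subsets_containing (X - {w}) z)
           ((\<lambda>T. T \<union> {w, z}) ` even_subsets (X - {w, z}))"
  unfolding image_Un_pair_even_subsets[OF assms]
  by (auto simp: even_subsets_containing_def even_subsets_def disjnt_def)

lemma cycle_partition_hub_edges:
  assumes "finite Z" "w \<noteq> z" "w \<notin> Z" "z \<notin> Z" "a \<in> Z" "b \<in> Z" "a \<noteq> b"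
  shows "\<exists>S. cycle_partition 4
           {{Inl x, Inr (T \<union> {w, z})} | x T. T \<in> even_subsets Z \<and> x \<in> {w, z}} S"
proof -
  \<comment> \<open>\<open>I\<close> holds one set of each pair \<open>{T, flip T}\<close>, which yields the 4-cycle
    \<open>w, T \<union> {w, z}, z, flip T \<union> {w, z}\<close>.\<close>
  define I where "I = {T \<in> even_subsets Z. a \<notin> T}"
  define flip where "flip T = sym_diff T {a, b}" for T
  define g :: "'a set \<Rightarrow> 'a + 'a set" where "g T = Inr (T \<union> {w, z})" for T
  have flip_flip: "flip (flip T) = T" for T
    unfolding flip_def by auto
  have flip_even: "flip T \<in> even_subsets Z" if "T \<in> even_subsets Z" for T
    using that assms(1,5-7) finite_subset even_card_sym_diff[of T "{a, b}"]
    unfolding flip_def even_subsets_def by auto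
  have inj_g: "inj_on g (even_subsets Z)"
    using assms(3,4) unfolding g_def inj_on_def even_subsets_def by blast
  have "inj_on (g \<circ> flip) I"
  proof (rule comp_inj_on)
    show "inj_on flip I" by (metis flip_flip inj_on_inverseI)
    show "inj_on g (flip ` I)"
      using inj_g flip_even unfolding I_def by (blast intro: inj_on_subset)
  qed
  moreover have "inj_on g I"
    using inj_g unfolding I_def by (blast intro: inj_on_subset)
  moreover have "disjnt (g ` I) ((g \<circ> flip) ` I)"
    using assms(2-5) unfolding I_def g_def flip_def disjnt_def by auto
  moreover have "g ` I \<union> (g \<circ> flip) ` I = g ` even_subsets Z"
  proof -
    have "T \<in> I \<union> flip ` I" if "T \<in> even_subsets Z" for T
      using that flip_even[OF that] flip_flip[of T] unfolding I_def flip_def by auto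
    then have "I \<union> flip ` I = even_subsets Z"
      using flip_even unfolding I_def by auto
    then show ?thesis by (metis image_Un image_comp)
  qed
  moreover have "{{Inl x, Inr (T \<union> {w, z})} | x T. T \<in> even_subsets Z \<and> x \<in> {w, z}}
      = {{u, v} | u v. u \<in> {Inl w, Inl z} \<and> v \<in> g ` even_subsets Z}"
    unfolding g_def by blast
  moreover have "finite I"
    using assms(1) unfolding I_def even_subsets_def by simp
  ultimately show ?thesis
    using cycle_partition_two_hubs[of I "Inl w" "Inl z" g "g \<circ> flip"] assms(2)
    unfolding g_def by auto
qed

lemma cycle_partition_even_subsets_step:
  assumes "cycle_partition k (comp_graph_edges (even_subsets (X - {z}))) S"
    and "cycle_partition k (comp_graph_edges (even_subsets_containing X z)) S'"
  shows "cycle_partition k (comp_graph_edges (even_subsets X)) (S \<union> S')"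
  unfolding even_subsets_split(1)[of X z] comp_graph_edges_Un
  using assms disjnt_comp_graph_edges[OF even_subsets_split(2)] by (rule cycle_partition_Un)

lemma cycle_partition_even_subsets_containing_step:
  assumes X: "finite X" "w \<in> X" "z \<in> X" "w \<noteq> z"
    and ab: "a \<in> X - {w, z}" "b \<in> X - {w, z}" "a \<noteq> b"
    and S1: "cycle_partition 6 (comp_graph_edges (even_subsets_containing (X - {w}) z)) S1"
    and S2: "cycle_partition 6 (comp_graph_edges (even_subsets (X - {w, z}))) S2"
  shows "\<exists>S. cycle_partition 6 (comp_graph_edges (even_subsets_containing X z)) S"
proof -
  define Z where "Z = X - {w, z}"
  let ?shift = "map_sum id (\<lambda>T. T \<union> {w, z})"
  let ?hub_edges = "{{Inl x, Inr (T \<union> {w, z})} | x T. T \<in> even_subsets Z \<and> x \<in> {w, z}}"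
  have off_hubs: "\<forall>T\<in>even_subsets Z. disjnt T {w, z}"
    unfolding Z_def even_subsets_def disjnt_def by blast
  obtain S3 where "cycle_partition 4 ?hub_edges S3"
    using cycle_partition_hub_edges[of Z w z a b] X ab unfolding Z_def by auto
  then have S3: "cycle_partition 6 ?hub_edges S3"
    by (rule cycle_partition_mono) simp
  have "cycle_partition 6 ((`) ?shift ` comp_graph_edges (even_subsets Z)) (map ?shift ` S2)"
    using S2 inj_on_map_sum_Un[OF off_hubs] unfolding Z_def by (rule cycle_partition_image)
  then have "cycle_partition 6 (comp_graph_edges ((\<lambda>T. T \<union> {w, z}) ` even_subsets Z))
      (map ?shift ` S2 \<union> S3)"
    unfolding comp_graph_edges_image_Un
    using S3 disjnt_comp_graph_edges_image_Un[OF off_hubs] by (rule cycle_partition_Un)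
  then have "cycle_partition 6 (comp_graph_edges (even_subsets_containing X z))
      (S1 \<union> (map ?shift ` S2 \<union> S3))"
    unfolding even_subsets_containing_split(1)[OF X] comp_graph_edges_Un Z_def
    using S1 disjnt_comp_graph_edges[OF even_subsets_containing_split(2)[OF X]]
    by (intro cycle_partition_Un)
  then show ?thesis by blast
qed

lemma cycle_partition_even_subsets_card_3:
  assumes "card X = 3"
  shows "\<exists>S. cycle_partition 6 (comp_graph_edges (even_subsets X)) S"
proof -
  obtain a b c where X: "X = {a, b, c}" and d: "a \<noteq> b" "a \<noteq> c" "b \<noteq> c"
    using assms card_3_iff by metis
  define cyc where "cyc = [Inl a, Inr {a, b}, Inl b, Inr {b, c}, Inl c, Inr {a, c}]"
  have "{a, b} \<noteq> {b, c}" "{a, b} \<noteq> {a, c}" "{b, c} \<noteq> {a, c}"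
    using d by (auto simp: doubleton_eq_iff)
  then have "distinct cyc"
    using d unfolding cyc_def by simp
  moreover have "even_subsets X = {{}, {a, b}, {b, c}, {a, c}}"
    using d unfolding X even_subsets_eq_filter_Pow by (auto simp: Pow_insert)
  then have "comp_graph_edges (even_subsets X) = cycle_edges cyc"
    by (simp add: cyc_def cycle_edges_6 comp_graph_edges_insert insert_commute)
  ultimately have "cycle_partition 6 (comp_graph_edges (even_subsets X)) {cyc}"
    unfolding cycle_partition_def cyc_def by simp
  then show ?thesis by blast
qed

lemma cycle_partition_even_subsets_containing_card_4:
  assumes "card X = 4" "z \<in> X"
  shows "\<exists>S. cycle_partition 6 (comp_graph_edges (even_subsets_containing X z)) S"
proof -
  have "card (X - {z}) = 3"
    using assms by (simp add: card_gt_0_iff)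
  then obtain w a b where "X - {z} = {w, a, b}" "w \<noteq> a" "w \<noteq> b" "a \<noteq> b"
    using card_3_iff by metis
  then have X: "X = {z, w, a, b}" and d: "distinct [z, w, a, b]"
    using assms(2) by auto
  define cyc1 where "cyc1 = [Inl w, Inr {z, w}, Inl z, Inr {z, a}, Inl a, Inr {z, w, a, b}]"
  define cyc2 where "cyc2 = [Inl z, Inr {z, b}, Inl b, Inr {z, w, a, b}]"
  have "{z, w} \<noteq> {z, a}" "{z, w} \<noteq> {z, w, a, b}" "{z, a} \<noteq> {z, w, a, b}"
    "{z, b} \<noteq> {z, w, a, b}"
    using d by (auto simp: doubleton_eq_iff)
  then have "distinct cyc1" "distinct cyc2"
    using d unfolding cyc1_def cyc2_def by auto
  moreover have "disjnt (cycle_edges cyc1) (cycle_edges cyc2)"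
    using d unfolding cyc1_def cyc2_def cycle_edges_6 cycle_edges_4 disjnt_def
    by (auto simp: doubleton_eq_iff)
  moreover have "even_subsets_containing X z = {{z, w}, {z, a}, {z, b}, {z, w, a, b}}"
    using d unfolding X even_subsets_containing_def even_subsets_eq_filter_Pow
    by (auto simp: Pow_insert)
  then have "comp_graph_edges (even_subsets_containing X z) = cycle_edges cyc1 \<union> cycle_edges cyc2"
    by (simp add: cyc1_def cyc2_def cycle_edges_6 cycle_edges_4 comp_graph_edges_insert
        insert_commute)
  ultimately have
    "cycle_partition 6 (comp_graph_edges (even_subsets_containing X z)) {cyc1, cyc2}"
    unfolding cycle_partition_def by (auto simp: cyc1_def cyc2_def pairwise_insert disjnt_sym)
  then show ?thesis by blast
qed

lemma cycle_partition_even_subsets_containing_from_psubsets: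
  assumes X: "finite X" "z \<in> X" "4 \<le> card X"
    and even: "\<And>Y. Y \<subset> X \<Longrightarrow> 3 \<le> card Y \<Longrightarrow>
      \<exists>S. cycle_partition 6 (comp_graph_edges (even_subsets Y)) S"
    and containing: "\<And>Y. Y \<subset> X \<Longrightarrow> z \<in> Y \<Longrightarrow> 4 \<le> card Y \<Longrightarrow>
      \<exists>S. cycle_partition 6 (comp_graph_edges (even_subsets_containing Y z)) S"
  shows "\<exists>S. cycle_partition 6 (comp_graph_edges (even_subsets_containing X z)) S"
proof (cases "card X = 4")
  case True
  then show ?thesis by (rule cycle_partition_even_subsets_containing_card_4[OF _ X(2)])
next
  case False
  with X(3) have "5 \<le> card X" by simp
  then have "2 \<le> card (X - {z})" using X(2) by simp
  then obtain w where w: "w \<in> X" "w \<noteq> z"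
    by (metis obtain_two_distinct_elements Diff_iff singletonI)
  then have card_Z: "card (X - {w, z}) = card X - 2"
    using X(1,2) by (simp add: card_Diff_subset)
  with \<open>5 \<le> card X\<close> have "2 \<le> card (X - {w, z})" by simp
  then obtain a b where ab: "a \<in> X - {w, z}" "b \<in> X - {w, z}" "a \<noteq> b"
    by (rule obtain_two_distinct_elements)
  have "\<exists>S. cycle_partition 6 (comp_graph_edges (even_subsets_containing (X - {w}) z)) S"
    by (rule containing) (use w X(2) \<open>5 \<le> card X\<close> in auto)
  then obtain S1
    where "cycle_partition 6 (comp_graph_edges (even_subsets_containing (X - {w}) z)) S1"
    by blast
  moreover have "\<exists>S. cycle_partition 6 (comp_graph_edges (even_subsets (X - {w, z}))) S"
    by (rule even) (use w card_Z \<open>5 \<le> card X\<close> in auto)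
  then obtain S2 where "cycle_partition 6 (comp_graph_edges (even_subsets (X - {w, z}))) S2"
    by blast
  ultimately show ?thesis
    by (rule cycle_partition_even_subsets_containing_step[OF X(1) w(1) X(2) w(2) ab])
qed

lemma cycle_partition_even_subsets:
  assumes "finite X" "3 \<le> card X"
  shows "\<exists>S. cycle_partition 6 (comp_graph_edges (even_subsets X)) S"
proof -
  have "(3 \<le> card X \<longrightarrow> (\<exists>S. cycle_partition 6 (comp_graph_edges (even_subsets X)) S)) \<and>
        (\<forall>z\<in>X. 4 \<le> card X \<longrightarrow>
           (\<exists>S. cycle_partition 6 (comp_graph_edges (even_subsets_containing X z)) S))"
    using assms(1)
  proof (induction X rule: finite_psubset_induct)
    case (psubset X)
    have containing:
      "\<exists>S. cycle_partition 6 (comp_graph_edges (even_subsets_containing X z)) S"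
      if "z \<in> X" "4 \<le> card X" for z
      by (rule cycle_partition_even_subsets_containing_from_psubsets[OF psubset.hyps that])
        (use psubset.IH in blast)+
    have "\<exists>S. cycle_partition 6 (comp_graph_edges (even_subsets X)) S" if "3 \<le> card X"
    proof (cases "card X = 3")
      case True
      then show ?thesis by (rule cycle_partition_even_subsets_card_3)
    next
      case False
      with that have "4 \<le> card X" by simp
      then obtain z where z: "z \<in> X" by fastforce
      then have "X - {z} \<subset> X" "3 \<le> card (X - {z})"
        using \<open>4 \<le> card X\<close> by auto
      then obtain S where S: "cycle_partition 6 (comp_graph_edges (even_subsets (X - {z}))) S"
        using psubset.IH by blast
      obtain S' where S': "cycle_partition 6 (comp_graph_edges (even_subsets_containing X z)) S'"
        using containing[OF z \<open>4 \<le> card X\<close>] by blast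
      show ?thesis
        using cycle_partition_even_subsets_step[OF S S'] by blast
    qed
    with containing show ?case by blast
  qed
  with assms(2) show ?thesis by blast
qed

lemma five_log2_ge_six:
  assumes "3 \<le> n"
  shows "6 \<le> 5 * log 2 (real n)"
proof -
  have "log 2 (2 ^ 6) \<le> log 2 (3 ^ 5 :: real)" by simp
  then have "6 \<le> 5 * log 2 (3 :: real)" by (simp only: log_nat_power) simp
  also have "log 2 3 \<le> log 2 (real n)"
    using assms by simp
  finally show ?thesis by simp
qed

theorem corollary2:
  fixes X :: "'a set" and n :: nat
  assumes "finite X" and "card X = n" and "n \<ge> 3"
  defines "\<C> \<equiv> {C. C \<subseteq> X \<and> even (card C) \<and> card C \<ge> 2}"
  shows "\<exists>\<sigma>. cycle_decomposition (comp_graph_edges \<C>) \<sigma> \<and>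
             mu_dec (total_size \<C>) \<sigma> \<le> 5 * log 2 (real n) \<and>
             alpha_dec (total_size \<C>) \<sigma> \<le> 5 * log 2 (real n)"
proof -
  have edges: "comp_graph_edges \<C> = comp_graph_edges (even_subsets X)"
    unfolding \<C>_def even_subsets_Diff_empty[OF assms(1), symmetric]
    by (rule comp_graph_edges_Diff_empty)
  have "finite \<C>"
    by (rule finite_subset[of _ "Pow X"]) (auto simp: \<C>_def assms(1))
  moreover have "\<forall>C\<in>\<C>. finite C"
    using assms(1) finite_subset unfolding \<C>_def by blast
  ultimately have size: "total_size \<C> = card (comp_graph_edges \<C>)"
    by (simp add: card_comp_graph_edges)
  obtain S where "cycle_partition 6 (comp_graph_edges \<C>) S"
    using cycle_partition_even_subsets assms(1-3) unfolding edges by blast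
  then obtain \<sigma> where \<sigma>: "cycle_decomposition (comp_graph_edges \<C>) \<sigma>"
    "\<forall>c\<in>set \<sigma>. card (cycle_edges c) \<le> 6"
    by (rule cycle_decomposition_of_cycle_partition)
  then have "mu_dec (total_size \<C>) \<sigma> \<le> 6" "alpha_dec (total_size \<C>) \<sigma> \<le> 6"
    unfolding size using mu_dec_le alpha_dec_le by fastforce+
  then show ?thesis
    using \<sigma>(1) five_log2_ge_six[OF assms(3)] by auto
qed

end
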